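(* Let $\lambda\in\Pi(\mu,\nu,\gamma)$. (1) If $\lambda$ is an extreme point of $\Pi(\mu,\nu,\gamma)$, then it is an extreme point of $\Pi(\lambda^{XY},\gamma)$, of $\Pi(\lambda^{YZ},\mu)$ and of $\Pi(\lambda^{XZ},\nu)$. (2) If $\lambda$ is an extreme point of $\Pi(\lambda^{XY},\gamma)$ and $\lambda^{XY}$ is an extreme point of $\Pi(\mu,\nu)$, then $\lambda$ is an extreme point of $\Pi(\mu,\nu,\gamma)$. (3) Assume $\lambda=(\nu^x\times\gamma^x)\otimes\mu$, where $\lambda^{XY}=\nu^x\otimes\mu$ and $\lambda^{XZ}=\gamma^x\otimes\mu$. (a) If $\lambda$ is an extreme point of $\Pi(\lambda^{XY},\gamma)$, then $\lambda^{XZ}$ is an extreme point of $\Pi(\mu,\gamma)$. (b) If $\lambda$ is an extreme point of both $\Pi(\lambda^{XY},\gamma)$ and $\Pi(\lambda^{XZ},\nu)$, then $\lambda$ is an extreme point of $\Pi(\mu,\nu,\gamma)$.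
   Context: $X,Y,Z$ are complete separable metric spaces with Borel probability measures $\mu,\nu,\gamma$; $\Pi(\mu,\nu,\gamma)$ is the set of Borel probability measures on $X\times Y\times Z$ with those marginals; $\Pi(\mu,\nu)$, $\Pi(\mu,\gamma)$ similarly. $\lambda^{XY},\lambda^{YZ},\lambda^{XZ}$ are the push-forwards of $\lambda$ under the projections onto $X\times Y$, $Y\times Z$, $X\times Z$. $\Pi(\lambda^{XY},\gamma)=\{\rho\in\Pi(\mu,\nu,\gamma):\rho^{XY}=\lambda^{XY}\}$, and analogously $\Pi(\lambda^{YZ},\mu)$, $\Pi(\lambda^{XZ},\nu)$. For a measure $\sigma$ on $A$ and a measurable family $(\eta^a)$ of probability measures on $B$, $(\eta^a\otimes\sigma)(E\times F)=\int_E\eta^a(F)d\sigma(a)$; $\nu^x\times\gamma^x$ is the product measure on $Y\times Z$. *)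

theory Defs
  imports "HOL-Probability.Probability"
begin

definition borel_prob :: "'a::topological_space measure \<Rightarrow> bool" where
  "borel_prob M \<longleftrightarrow> sets M = sets borel \<and> prob_space M"

definition pX :: "'x \<times> 'y \<times> 'z \<Rightarrow> 'x" where "pX w = fst w"
definition pY :: "'x \<times> 'y \<times> 'z \<Rightarrow> 'y" where "pY w = fst (snd w)"
definition pZ :: "'x \<times> 'y \<times> 'z \<Rightarrow> 'z" where "pZ w = snd (snd w)"
definition pXY :: "'x \<times> 'y \<times> 'z \<Rightarrow> 'x \<times> 'y" where "pXY w = (fst w, fst (snd w))"
definition pYZ :: "'x \<times> 'y \<times> 'z \<Rightarrow> 'y \<times> 'z" where "pYZ w = snd w"
definition pXZ :: "'x \<times> 'y \<times> 'z \<Rightarrow> 'x \<times> 'z" where "pXZ w = (fst w, snd (snd w))"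

definition margXY :: "('x::topological_space \<times> 'y::topological_space \<times> 'z::topological_space) measure \<Rightarrow> ('x \<times> 'y) measure"
  where "margXY l = distr l borel pXY"
definition margYZ :: "('x::topological_space \<times> 'y::topological_space \<times> 'z::topological_space) measure \<Rightarrow> ('y \<times> 'z) measure"
  where "margYZ l = distr l borel pYZ"
definition margXZ :: "('x::topological_space \<times> 'y::topological_space \<times> 'z::topological_space) measure \<Rightarrow> ('x \<times> 'z) measure"
  where "margXZ l = distr l borel pXZ"

definition Pi3 :: "'x::topological_space measure \<Rightarrow> 'y::topological_space measure \<Rightarrow> 'z::topological_space measure
    \<Rightarrow> ('x \<times> 'y \<times> 'z) measure set" where
  "Pi3 \<mu> \<nu> \<gamma> = {\<rho>. borel_prob \<rho> \<and> distr \<rho> borel pX = \<mu> \<and> distr \<rho> borel pY = \<nu> \<and> distr \<rho> borel pZ = \<gamma>}"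

definition Pi2 :: "'a::topological_space measure \<Rightarrow> 'b::topological_space measure \<Rightarrow> ('a \<times> 'b) measure set" where
  "Pi2 \<mu> \<nu> = {\<rho>. borel_prob \<rho> \<and> distr \<rho> borel fst = \<mu> \<and> distr \<rho> borel snd = \<nu>}"

text \<open>\<Pi>(\<lambda>^{XY},\<gamma>), \<Pi>(\<lambda>^{YZ},\<mu>), \<Pi>(\<lambda>^{XZ},\<nu>) (as subsets of \<Pi>(\<mu>,\<nu>,\<gamma>)).\<close>
definition Pi_XY :: "'x::topological_space measure \<Rightarrow> 'y::topological_space measure \<Rightarrow> 'z::topological_space measure
    \<Rightarrow> ('x \<times> 'y \<times> 'z) measure \<Rightarrow> ('x \<times> 'y \<times> 'z) measure set" where
  "Pi_XY \<mu> \<nu> \<gamma> l = {\<rho> \<in> Pi3 \<mu> \<nu> \<gamma>. margXY \<rho> = margXY l}"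
definition Pi_YZ :: "'x::topological_space measure \<Rightarrow> 'y::topological_space measure \<Rightarrow> 'z::topological_space measure
    \<Rightarrow> ('x \<times> 'y \<times> 'z) measure \<Rightarrow> ('x \<times> 'y \<times> 'z) measure set" where
  "Pi_YZ \<mu> \<nu> \<gamma> l = {\<rho> \<in> Pi3 \<mu> \<nu> \<gamma>. margYZ \<rho> = margYZ l}"
definition Pi_XZ :: "'x::topological_space measure \<Rightarrow> 'y::topological_space measure \<Rightarrow> 'z::topological_space measure
    \<Rightarrow> ('x \<times> 'y \<times> 'z) measure \<Rightarrow> ('x \<times> 'y \<times> 'z) measure set" where
  "Pi_XZ \<mu> \<nu> \<gamma> l = {\<rho> \<in> Pi3 \<mu> \<nu> \<gamma>. margXZ \<rho> = margXZ l}"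

definition extreme_point :: "'a measure \<Rightarrow> 'a measure set \<Rightarrow> bool" where
  "extreme_point l S \<longleftrightarrow> l \<in> S \<and>
     (\<forall>\<rho>1\<in>S. \<forall>\<rho>2\<in>S. \<forall>t::real. 0 < t \<and> t < 1 \<and>
        (\<forall>A\<in>sets l. measure l A = t * measure \<rho>1 A + (1 - t) * measure \<rho>2 A) \<longrightarrow> \<rho>1 = \<rho>2)"

definition prob_kernel :: "('a::topological_space \<Rightarrow> 'b::topological_space measure) \<Rightarrow> bool" where
  "prob_kernel \<eta> \<longleftrightarrow> \<eta> \<in> borel \<rightarrow>\<^sub>M prob_algebra borel"

text \<open>P = \<eta>^a \<otimes> \<sigma>: P is the Borel measure on A \<times> B with
  P(E \<times> F) = \<integral>_E \<eta>^a(F) d\<sigma>(a) for all Borel E, F.\<close>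
definition is_compound :: "('a::topological_space \<times> 'b::topological_space) measure
    \<Rightarrow> ('a \<Rightarrow> 'b measure) \<Rightarrow> 'a measure \<Rightarrow> bool" where
  "is_compound P \<eta> \<sigma> \<longleftrightarrow> sets P = sets borel \<and>
     (\<forall>E\<in>sets borel. \<forall>F\<in>sets borel.
        emeasure P (E \<times> F) = (\<integral>\<^sup>+ a. indicator E a * emeasure (\<eta> a) F \<partial>\<sigma>))"

end

theory Submission
  imports Defs
begin

text \<open>
  Parts (1) and (2) are bookkeeping with convex combinations: the three restricted sets are
  subsets of \<open>\<Pi>(\<mu>,\<nu>,\<gamma>)\<close>, and a decomposition of \<open>\<lambda>\<close> in \<open>\<Pi>(\<mu>,\<nu>,\<gamma>)\<close> pushes forward to a
  decomposition of \<open>\<lambda>\<^sup>X\<^sup>Y\<close>, which is trivial when \<open>\<lambda>\<^sup>X\<^sup>Y\<close> is extreme.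

  For (3a), write \<open>\<lambda>\<^sup>X\<^sup>Z = t \<pi>\<^sub>1 + (1 - t) \<pi>\<^sub>2\<close> and let \<open>f\<^sub>i = d\<pi>\<^sub>i / d\<lambda>\<^sup>X\<^sup>Z\<close>. Then
  \<open>t f\<^sub>1 + (1 - t) f\<^sub>2 = 1\<close> almost everywhere, so \<open>\<rho>\<^sub>i = f\<^sub>i(x,z) \<lambda>\<close> decompose \<open>\<lambda>\<close> and
  \<open>\<rho>\<^sub>i\<^sup>X\<^sup>Z = \<pi>\<^sub>i\<close>. Since \<open>\<pi>\<^sub>i\<close> has first marginal \<open>\<mu>\<close>, \<open>\<integral> f\<^sub>i(x,z) d\<gamma>\<^sup>x(z) = 1\<close> for
  \<open>\<mu>\<close>-almost every \<open>x\<close>; as \<open>y\<close> and \<open>z\<close> are independent under \<open>\<nu>\<^sup>x \<times> \<gamma>\<^sup>x\<close>, the reweighting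
  therefore does not change the \<open>XY\<close>-marginal, i.e. \<open>\<rho>\<^sub>i \<in> \<Pi>(\<lambda>\<^sup>X\<^sup>Y,\<gamma>)\<close>. Extremality of
  \<open>\<lambda>\<close> there gives \<open>\<rho>\<^sub>1 = \<rho>\<^sub>2\<close>, hence \<open>\<pi>\<^sub>1 = \<pi>\<^sub>2\<close>. Exchanging the roles of \<open>Y\<close> and \<open>Z\<close>
  shows that \<open>\<lambda>\<^sup>X\<^sup>Y\<close> is extreme when \<open>\<lambda>\<close> is extreme in \<open>\<Pi>(\<lambda>\<^sup>X\<^sup>Z,\<nu>)\<close>, and (3b) follows by (2).
\<close>

section \<open>Projections and marginals\<close>

lemma borel_measurable_fst_snd [measurable]:
  "(fst :: 'a::topological_space \<times> 'b::topological_space \<Rightarrow> 'a) \<in> borel_measurable borel"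
  "(snd :: 'a::topological_space \<times> 'b::topological_space \<Rightarrow> 'b) \<in> borel_measurable borel"
  by (rule borel_measurable_continuous_onI, intro continuous_intros)+

lemma borel_measurable_projections [measurable]:
  "(pX :: 'x::topological_space \<times> 'y::topological_space \<times> 'z::topological_space \<Rightarrow> _) \<in> borel_measurable borel"
  "(pY :: 'x::topological_space \<times> 'y::topological_space \<times> 'z::topological_space \<Rightarrow> _) \<in> borel_measurable borel"
  "(pZ :: 'x::topological_space \<times> 'y::topological_space \<times> 'z::topological_space \<Rightarrow> _) \<in> borel_measurable borel"
  "(pXY :: 'x::topological_space \<times> 'y::topological_space \<times> 'z::topological_space \<Rightarrow> _) \<in> borel_measurable borel"
  "(pXZ :: 'x::topological_space \<times> 'y::topological_space \<times> 'z::topological_space \<Rightarrow> _) \<in> borel_measurable borel"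
  unfolding pX_def[abs_def] pY_def[abs_def] pZ_def[abs_def] pXY_def[abs_def] pXZ_def[abs_def]
  by (rule borel_measurable_continuous_onI, intro continuous_intros)+

lemma projections_comp:
  "fst \<circ> pXY = pX" "snd \<circ> pXY = pY" "fst \<circ> pXZ = pX" "snd \<circ> pXZ = pZ"
  by (auto simp: pX_def pY_def pZ_def pXY_def pXZ_def)

lemma measurable_borel_sets_eq:
  "sets M = sets borel \<Longrightarrow> f \<in> borel \<rightarrow>\<^sub>M N \<Longrightarrow> f \<in> M \<rightarrow>\<^sub>M N"
  using measurable_cong_sets by blast

lemma borel_prob_distr:
  assumes "borel_prob M" "f \<in> borel_measurable borel"
  shows "borel_prob (distr M borel f)"
  using assms prob_space.prob_space_distr[OF _ measurable_borel_sets_eq]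
  unfolding borel_prob_def by auto

lemma distr_distr_borel:
  assumes "sets M = sets borel" "f \<in> borel_measurable borel" "g \<in> borel_measurable borel"
  shows "distr (distr M borel f) borel g = distr M borel (g \<circ> f)"
  using distr_distr[OF assms(3) measurable_borel_sets_eq[OF assms(1,2)]] .

lemma prob_space_eqI:
  assumes "prob_space M" "prob_space N" "sets M = sets N"
    and "\<And>A. A \<in> sets M \<Longrightarrow> measure M A = measure N A"
  shows "M = N"
proof (rule measure_eqI[OF assms(3)])
  fix A assume "A \<in> sets M"
  then show "emeasure M A = emeasure N A"
    using assms by (metis finite_measure.emeasure_eq_measure prob_space_def)
qed

lemma
  assumes "sets \<rho> = sets borel"
  shows fst_margXY: "distr (margXY \<rho>) borel fst = distr \<rho> borel pX"
    and snd_margXY: "distr (margXY \<rho>) borel snd = distr \<rho> borel pY"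
    and fst_margXZ: "distr (margXZ \<rho>) borel fst = distr \<rho> borel pX"
    and snd_margXZ: "distr (margXZ \<rho>) borel snd = distr \<rho> borel pZ"
  using assms unfolding margXY_def margXZ_def
  by (simp_all add: distr_distr_borel projections_comp)

lemma margXY_in_Pi2: "\<rho> \<in> Pi3 \<mu> \<nu> \<gamma> \<Longrightarrow> margXY \<rho> \<in> Pi2 \<mu> \<nu>"
  and margXZ_in_Pi2: "\<rho> \<in> Pi3 \<mu> \<nu> \<gamma> \<Longrightarrow> margXZ \<rho> \<in> Pi2 \<mu> \<gamma>"
  unfolding Pi3_def Pi2_def margXY_def margXZ_def
  by (auto simp: borel_prob_distr fst_margXY[unfolded margXY_def] snd_margXY[unfolded margXY_def]
      fst_margXZ[unfolded margXZ_def] snd_margXZ[unfolded margXZ_def] borel_prob_def[of \<rho>])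

lemma Pi_XY_memI:
  assumes "l \<in> Pi3 \<mu> \<nu> \<gamma>" "borel_prob \<rho>" "margXY \<rho> = margXY l" "distr \<rho> borel pZ = \<gamma>"
  shows "\<rho> \<in> Pi_XY \<mu> \<nu> \<gamma> l"
  using assms fst_margXY[of \<rho>] snd_margXY[of \<rho>] fst_margXY[of l] snd_margXY[of l]
  by (auto simp: Pi_XY_def Pi3_def borel_prob_def)

lemma Pi_XZ_memI:
  assumes "l \<in> Pi3 \<mu> \<nu> \<gamma>" "borel_prob \<rho>" "margXZ \<rho> = margXZ l" "distr \<rho> borel pY = \<nu>"
  shows "\<rho> \<in> Pi_XZ \<mu> \<nu> \<gamma> l"
  using assms fst_margXZ[of \<rho>] snd_margXZ[of \<rho>] fst_margXZ[of l] snd_margXZ[of l]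
  by (auto simp: Pi_XZ_def Pi3_def borel_prob_def)

section \<open>Convex combinations of probability measures\<close>

lemma mixture_distr:
  assumes mix: "\<forall>A\<in>sets M. measure M A = t * measure N1 A + (1 - t) * measure N2 A"
    and sets: "sets M = sets borel" "sets N1 = sets borel" "sets N2 = sets borel"
    and f: "f \<in> borel_measurable borel"
  shows "\<forall>A\<in>sets borel. measure (distr M borel f) A
           = t * measure (distr N1 borel f) A + (1 - t) * measure (distr N2 borel f) A"
proof
  fix A :: "'b set" assume A: "A \<in> sets borel"
  have "space M = UNIV" "space N1 = UNIV" "space N2 = UNIV"
    using sets by (metis sets_eq_imp_space_eq space_borel)+
  moreover note f_meas = measurable_borel_sets_eq[OF sets(1) f] measurable_borel_sets_eq[OF sets(2) f]
    measurable_borel_sets_eq[OF sets(3) f]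
  ultimately show "measure (distr M borel f) A
           = t * measure (distr N1 borel f) A + (1 - t) * measure (distr N2 borel f) A"
    using mix measurable_sets[OF f_meas(1) A]
    by (simp only: measure_distr[OF f_meas(1) A] measure_distr[OF f_meas(2) A] measure_distr[OF f_meas(3) A])
qed

lemma extreme_point_subset:
  "extreme_point l S \<Longrightarrow> l \<in> T \<Longrightarrow> T \<subseteq> S \<Longrightarrow> extreme_point l T"
  unfolding extreme_point_def by blast

lemma emeasure_mixture_iff:
  assumes "prob_space M" "prob_space N1" "prob_space N2" "0 \<le> t" "t \<le> 1"
  shows "emeasure M A = ennreal t * emeasure N1 A + ennreal (1 - t) * emeasure N2 A
     \<longleftrightarrow> measure M A = t * measure N1 A + (1 - t) * measure N2 A"
proof -
  interpret M: prob_space M by fact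
  interpret N1: prob_space N1 by fact
  interpret N2: prob_space N2 by fact
  have eq: "ennreal t * emeasure N1 A + ennreal (1 - t) * emeasure N2 A
      = ennreal (t * measure N1 A + (1 - t) * measure N2 A)"
    using assms by (simp add: N1.emeasure_eq_measure N2.emeasure_eq_measure ennreal_mult ennreal_plus)
  show ?thesis
    unfolding M.emeasure_eq_measure eq using assms by (subst ennreal_inj) auto
qed

lemma absolutely_continuous_mixture:
  assumes L: "prob_space L" and N: "prob_space N1" "sets N1 = sets L"
    and t: "0 < t" "t \<le> 1"
    and mix: "\<forall>A\<in>sets L. measure L A = t * measure N1 A + (1 - t) * measure N2 A"
  shows "absolutely_continuous L N1"
  unfolding absolutely_continuous_def
proof
  interpret L: prob_space L by fact
  interpret N1: prob_space N1 by fact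
  fix A assume A: "A \<in> null_sets L"
  then have "measure L A = 0"
    by (simp add: measure_def null_setsD1)
  then have "t * measure N1 A + (1 - t) * measure N2 A = 0"
    using mix null_setsD2[OF A] by simp
  moreover have "0 \<le> measure N1 A" "0 \<le> measure N2 A" by simp_all
  ultimately have "measure N1 A = 0"
    using t by (smt (verit) mult_nonneg_nonneg mult_pos_pos)
  then show "A \<in> null_sets N1"
    using null_setsD2[OF A] N(2) by (intro null_setsI) (simp_all add: N1.emeasure_eq_measure)
qed

lemma emeasure_density_mixture:
  assumes [measurable]: "f1 \<in> borel_measurable M" "f2 \<in> borel_measurable M" and A: "A \<in> sets M"
  shows "emeasure (density M (\<lambda>x. a * f1 x + b * f2 x)) A
       = a * emeasure (density M f1) A + b * emeasure (density M f2) A"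
proof -
  have "emeasure (density M (\<lambda>x. a * f1 x + b * f2 x)) A
      = (\<integral>\<^sup>+x. a * (f1 x * indicator A x) + b * (f2 x * indicator A x) \<partial>M)"
    using A by (simp add: emeasure_density distrib_right mult.assoc)
  also have "\<dots> = a * emeasure (density M f1) A + b * emeasure (density M f2) A"
    using A by (simp add: emeasure_density nn_integral_add nn_integral_cmult)
  finally show ?thesis .
qed

lemma density_RN_deriv_mixture:
  assumes L: "prob_space L" and \<pi>: "prob_space \<pi>1" "prob_space \<pi>2" "sets \<pi>1 = sets L" "sets \<pi>2 = sets L"
    and t: "0 < t" "t < 1"
    and mix: "\<forall>A\<in>sets L. measure L A = t * measure \<pi>1 A + (1 - t) * measure \<pi>2 A"
  shows "density L (RN_deriv L \<pi>1) = \<pi>1" "density L (RN_deriv L \<pi>2) = \<pi>2"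
    and "AE x in L. ennreal t * RN_deriv L \<pi>1 x + ennreal (1 - t) * RN_deriv L \<pi>2 x = 1"
proof -
  interpret L: prob_space L by fact
  have "absolutely_continuous L \<pi>1"
    using t by (intro absolutely_continuous_mixture[OF L \<pi>(1,3) _ _ mix]) simp_all
  then show dens1: "density L (RN_deriv L \<pi>1) = \<pi>1"
    using \<pi> by (intro L.density_RN_deriv) simp_all
  have mix': "\<forall>A\<in>sets L. measure L A = (1 - t) * measure \<pi>2 A + (1 - (1 - t)) * measure \<pi>1 A"
    using mix by simp
  have "absolutely_continuous L \<pi>2"
    using t by (intro absolutely_continuous_mixture[OF L \<pi>(2,4) _ _ mix']) simp_all
  then show dens2: "density L (RN_deriv L \<pi>2) = \<pi>2"
    using \<pi> by (intro L.density_RN_deriv) simp_all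
  define g where "g x = ennreal t * RN_deriv L \<pi>1 x + ennreal (1 - t) * RN_deriv L \<pi>2 x" for x
  have "density L g = density L (\<lambda>_. 1)"
  proof (rule measure_eqI)
    fix A assume "A \<in> sets (density L g)"
    then have A: "A \<in> sets L" by simp
    have "emeasure (density L g) A = ennreal t * emeasure \<pi>1 A + ennreal (1 - t) * emeasure \<pi>2 A"
      using emeasure_density_mixture[OF borel_measurable_RN_deriv[of L \<pi>1] borel_measurable_RN_deriv[of L \<pi>2] A,
          where a="ennreal t" and b="ennreal (1 - t)"]
      unfolding g_def dens1 dens2 .
    also have "\<dots> = emeasure L A"
      using emeasure_mixture_iff[OF L \<pi>(1,2), where t=t and A=A] mix A t by simp
    finally show "emeasure (density L g) A = emeasure (density L (\<lambda>_. 1)) A"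
      by (simp add: density_1)
  qed simp
  then show "AE x in L. g x = 1"
    by (intro L.density_unique) (simp_all add: g_def[abs_def])
qed

lemma density_decomposition:
  fixes l :: "'a::topological_space measure" and q :: "'a \<Rightarrow> 'b::topological_space"
  assumes l: "borel_prob l" and q: "q \<in> borel_measurable borel"
    and \<pi>: "borel_prob \<pi>1" "borel_prob \<pi>2" and t: "0 < t" "t < 1"
    and mix: "\<forall>A\<in>sets borel. measure (distr l borel q) A = t * measure \<pi>1 A + (1 - t) * measure \<pi>2 A"
  obtains f1 f2 where "f1 \<in> borel_measurable borel" "f2 \<in> borel_measurable borel"
    "distr (density l (\<lambda>w. f1 (q w))) borel q = \<pi>1"
    "distr (density l (\<lambda>w. f2 (q w))) borel q = \<pi>2"
    "\<forall>A\<in>sets l. measure l A = t * measure (density l (\<lambda>w. f1 (q w))) A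
        + (1 - t) * measure (density l (\<lambda>w. f2 (q w))) A"
proof -
  define L where "L = distr l borel q"
  define f1 where "f1 = RN_deriv L \<pi>1"
  define f2 where "f2 = RN_deriv L \<pi>2"
  have l': "prob_space l" "sets l = sets borel" and \<pi>': "prob_space \<pi>1" "prob_space \<pi>2"
    "sets \<pi>1 = sets borel" "sets \<pi>2 = sets borel"
    using l \<pi> by (auto simp: borel_prob_def)
  have q_l: "q \<in> l \<rightarrow>\<^sub>M borel"
    using measurable_borel_sets_eq[OF l'(2) q] .
  have sets_L: "sets L = sets borel" and "prob_space L"
    using borel_prob_distr[OF l q] by (auto simp: borel_prob_def L_def)
  note RN = density_RN_deriv_mixture[OF this(2) \<pi>'(1,2), unfolded sets_L, OF \<pi>'(3,4) t,
      folded f1_def f2_def, unfolded L_def, OF mix]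
  have f_meas [measurable]: "f1 \<in> borel_measurable borel" "f2 \<in> borel_measurable borel"
    unfolding f1_def f2_def using borel_measurable_RN_deriv measurable_cong_sets[OF sets_L refl] by blast+
  have lift: "distr (density l (\<lambda>w. f1 (q w))) borel q = \<pi>1"
    "distr (density l (\<lambda>w. f2 (q w))) borel q = \<pi>2"
    using density_distr[OF f_meas(1) q_l] density_distr[OF f_meas(2) q_l] RN(1,2) by (simp_all add: L_def)
  have lift_prob: "prob_space (density l (\<lambda>w. f1 (q w)))" "prob_space (density l (\<lambda>w. f2 (q w)))"
    using lift \<pi>' q_l by (auto intro: prob_space_distrD)
  have "AE w in l. ennreal t * f1 (q w) + ennreal (1 - t) * f2 (q w) = 1"
  proof -
    have "{x \<in> space borel. ennreal t * f1 x + ennreal (1 - t) * f2 x = 1} \<in> sets borel"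
      by measurable
    then show ?thesis
      using RN(3) by (subst (asm) AE_distr_iff[OF q_l]) simp_all
  qed
  then have l_eq: "l = density l (\<lambda>w. ennreal t * f1 (q w) + ennreal (1 - t) * f2 (q w))"
    using f_meas q_l by (subst density_cong[of _ _ "\<lambda>_. 1"]) (auto simp: density_1)
  have "measure l A = t * measure (density l (\<lambda>w. f1 (q w))) A
        + (1 - t) * measure (density l (\<lambda>w. f2 (q w))) A" if "A \<in> sets l" for A
  proof -
    have "emeasure l A = ennreal t * emeasure (density l (\<lambda>w. f1 (q w))) A
        + ennreal (1 - t) * emeasure (density l (\<lambda>w. f2 (q w))) A"
      by (subst l_eq) (intro emeasure_density_mixture measurable_compose[OF q_l] f_meas that)
    then show ?thesis
      using emeasure_mixture_iff[OF l'(1) lift_prob, where t=t and A=A] t by simp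
  qed
  then show ?thesis
    using that[OF f_meas lift] by blast
qed

lemma extreme_point_distrI:
  fixes l :: "'a::topological_space measure" and q :: "'a \<Rightarrow> 'b::topological_space"
  assumes extreme: "extreme_point l T" and l: "borel_prob l" and q: "q \<in> borel_measurable borel"
    and S: "distr l borel q \<in> S" "\<And>\<pi>. \<pi> \<in> S \<Longrightarrow> borel_prob \<pi>"
    and lift: "\<And>f. f \<in> borel_measurable borel \<Longrightarrow> prob_space (density l (\<lambda>w. f (q w))) \<Longrightarrow>
      distr (density l (\<lambda>w. f (q w))) borel q \<in> S \<Longrightarrow> density l (\<lambda>w. f (q w)) \<in> T"
  shows "extreme_point (distr l borel q) S"
  unfolding extreme_point_def
proof (intro conjI ballI allI impI)
  show "distr l borel q \<in> S" by fact
  fix \<pi>1 \<pi>2 t assume \<pi>: "\<pi>1 \<in> S" "\<pi>2 \<in> S"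
    and mix: "0 < t \<and> t < 1 \<and> (\<forall>A\<in>sets (distr l borel q).
      measure (distr l borel q) A = t * measure \<pi>1 A + (1 - t) * measure \<pi>2 A)"
  obtain f1 f2 where f: "f1 \<in> borel_measurable borel" "f2 \<in> borel_measurable borel"
    and lift1: "distr (density l (\<lambda>w. f1 (q w))) borel q = \<pi>1"
    and lift2: "distr (density l (\<lambda>w. f2 (q w))) borel q = \<pi>2"
    and mix_l: "\<forall>A\<in>sets l. measure l A = t * measure (density l (\<lambda>w. f1 (q w))) A
        + (1 - t) * measure (density l (\<lambda>w. f2 (q w))) A"
    using density_decomposition[OF l q S(2)[OF \<pi>(1)] S(2)[OF \<pi>(2)]] mix by auto
  have q_density: "q \<in> density l g \<rightarrow>\<^sub>M borel" for g
    using l q by (simp add: borel_prob_def measurable_borel_sets_eq)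
  have "density l (\<lambda>w. f1 (q w)) \<in> T" "density l (\<lambda>w. f2 (q w)) \<in> T"
    using lift1 lift2 \<pi> S(2) by (auto intro!: lift f prob_space_distrD[OF q_density] simp: borel_prob_def)
  then have "density l (\<lambda>w. f1 (q w)) = density l (\<lambda>w. f2 (q w))"
    using extreme mix mix_l unfolding extreme_point_def by blast
  then show "\<pi>1 = \<pi>2"
    using lift1 lift2 by simp
qed

lemma extreme_point_Pi3I:
  assumes l: "l \<in> Pi3 \<mu> \<nu> \<gamma>" and extreme_fibre: "extreme_point l (Pi_XY \<mu> \<nu> \<gamma> l)"
    and extreme_margXY: "extreme_point (margXY l) (Pi2 \<mu> \<nu>)"
  shows "extreme_point l (Pi3 \<mu> \<nu> \<gamma>)"
  unfolding extreme_point_def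
proof (intro conjI ballI allI impI)
  show "l \<in> Pi3 \<mu> \<nu> \<gamma>" by fact
  fix \<rho>1 \<rho>2 t assume \<rho>: "\<rho>1 \<in> Pi3 \<mu> \<nu> \<gamma>" "\<rho>2 \<in> Pi3 \<mu> \<nu> \<gamma>"
    and mix: "0 < t \<and> t < 1 \<and> (\<forall>A\<in>sets l. measure l A = t * measure \<rho>1 A + (1 - t) * measure \<rho>2 A)"
  have sets: "sets l = sets borel" "sets \<rho>1 = sets borel" "sets \<rho>2 = sets borel"
    using l \<rho> by (auto simp: Pi3_def borel_prob_def)
  have mix_XY: "\<forall>A\<in>sets borel. measure (margXY l) A
      = t * measure (margXY \<rho>1) A + (1 - t) * measure (margXY \<rho>2) A"
    unfolding margXY_def using mix sets by (intro mixture_distr) auto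
  then have XY_eq: "margXY \<rho>1 = margXY \<rho>2"
    using extreme_margXY margXY_in_Pi2[OF \<rho>(1)] margXY_in_Pi2[OF \<rho>(2)] mix
    unfolding extreme_point_def by (auto simp: margXY_def)
  have "measure (margXY l) A = measure (margXY \<rho>1) A" if "A \<in> sets borel" for A
    using mix_XY that by (simp add: XY_eq[symmetric] left_diff_distrib)
  then have "margXY l = margXY \<rho>1"
    using margXY_in_Pi2[OF l] margXY_in_Pi2[OF \<rho>(1)]
    by (intro prob_space_eqI) (auto simp: Pi2_def borel_prob_def margXY_def)
  then have "\<rho>1 \<in> Pi_XY \<mu> \<nu> \<gamma> l" "\<rho>2 \<in> Pi_XY \<mu> \<nu> \<gamma> l"
    using \<rho> XY_eq by (auto simp: Pi_XY_def)
  then show "\<rho>1 = \<rho>2"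
    using extreme_fibre mix unfolding extreme_point_def by blast
qed

section \<open>Compound measures with product kernels\<close>

lemma nn_integral_pair_measure_mult:
  assumes "sigma_finite_measure M2" "f \<in> borel_measurable M1" "g \<in> borel_measurable M2"
  shows "(\<integral>\<^sup>+p. f (fst p) * g (snd p) \<partial>(M1 \<Otimes>\<^sub>M M2)) = (\<integral>\<^sup>+x. f x \<partial>M1) * (\<integral>\<^sup>+y. g y \<partial>M2)"
proof -
  interpret M2: sigma_finite_measure M2 by fact
  have "(\<integral>\<^sup>+p. f (fst p) * g (snd p) \<partial>(M1 \<Otimes>\<^sub>M M2)) = (\<integral>\<^sup>+x. \<integral>\<^sup>+y. f x * g y \<partial>M2 \<partial>M1)"
    using assms by (subst M2.nn_integral_fst[symmetric]) (auto simp: case_prod_beta)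
  also have "\<dots> = (\<integral>\<^sup>+x. f x * (\<integral>\<^sup>+y. g y \<partial>M2) \<partial>M1)"
    using assms by (simp add: nn_integral_cmult)
  also have "\<dots> = (\<integral>\<^sup>+x. f x \<partial>M1) * (\<integral>\<^sup>+y. g y \<partial>M2)"
    using assms by (simp add: nn_integral_multc)
  finally show ?thesis .
qed

lemma borel_prod_measure_eqI:
  fixes M N :: "('a::second_countable_topology \<times> 'b::second_countable_topology) measure"
  assumes sets: "sets M = sets borel" "sets N = sets borel" and finite: "emeasure M UNIV \<noteq> \<infinity>"
    and eq: "\<And>A B. A \<in> sets borel \<Longrightarrow> B \<in> sets borel \<Longrightarrow> emeasure M (A \<times> B) = emeasure N (A \<times> B)"
  shows "M = N"
proof -
  define E where "E = {A \<times> B | A B. A \<in> sets (borel :: 'a measure) \<and> B \<in> sets (borel :: 'b measure)}"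
  have "sets (borel :: ('a \<times> 'b) measure) = sets (borel \<Otimes>\<^sub>M (borel :: 'b measure))"
    by (simp only: borel_prod)
  then have sets_E: "sets (borel :: ('a \<times> 'b) measure) = sigma_sets UNIV E"
    unfolding E_def by (simp add: sets_pair_measure)
  show ?thesis
  proof (rule measure_eqI_generator_eq[where E=E and \<Omega>=UNIV and A="\<lambda>_. UNIV"])
    show "Int_stable E"
      unfolding E_def by (rule Int_stable_pair_measure_generator)
    show "range (\<lambda>_. UNIV) \<subseteq> E"
      unfolding E_def by (auto intro!: exI[of _ UNIV])
  qed (use sets sets_E finite eq in \<open>auto simp: E_def\<close>)
qed

locale compound_product =
  fixes \<mu> :: "'x::polish_space measure" and \<nu>x :: "'x \<Rightarrow> 'y::polish_space measure"
    and \<gamma>x :: "'x \<Rightarrow> 'z::polish_space measure" and l :: "('x \<times> 'y \<times> 'z) measure"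
  assumes borel_prob_\<mu>: "borel_prob \<mu>"
    and kernel_\<nu>x: "prob_kernel \<nu>x" and kernel_\<gamma>x: "prob_kernel \<gamma>x"
    and borel_prob_l: "borel_prob l"
    and compound: "is_compound l (\<lambda>x. \<nu>x x \<Otimes>\<^sub>M \<gamma>x x) \<mu>"
begin

lemma sets_\<mu>: "sets \<mu> = sets borel"
  and sets_l [measurable_cong]: "sets l = sets borel"
  and prob_space_l: "prob_space l"
  using borel_prob_\<mu> borel_prob_l by (auto simp: borel_prob_def)

lemma space_l: "space l = UNIV"
  using sets_eq_imp_space_eq[OF sets_l] by simp

lemma vimage_pXY_in_sets_l: "A \<in> sets borel \<Longrightarrow> pXY -` A \<in> sets l"
  and vimage_pXZ_in_sets_l: "B \<in> sets borel \<Longrightarrow> pXZ -` B \<in> sets l"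
  using measurable_sets[OF measurable_borel_sets_eq[OF sets_l borel_measurable_projections(4)]]
    measurable_sets[OF measurable_borel_sets_eq[OF sets_l borel_measurable_projections(5)]]
  by (simp_all add: space_l)

lemma
  shows prob_space_\<nu>x: "prob_space (\<nu>x x)" and sets_\<nu>x: "sets (\<nu>x x) = sets borel"
    and prob_space_\<gamma>x: "prob_space (\<gamma>x x)" and sets_\<gamma>x: "sets (\<gamma>x x) = sets borel"
    and measurable_\<nu>x: "\<nu>x \<in> borel \<rightarrow>\<^sub>M subprob_algebra borel"
    and measurable_\<gamma>x: "\<gamma>x \<in> borel \<rightarrow>\<^sub>M subprob_algebra borel"
  using measurable_space[OF kernel_\<nu>x[unfolded prob_kernel_def], of x]
    measurable_space[OF kernel_\<gamma>x[unfolded prob_kernel_def], of x]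
    measurable_prob_algebraD[OF kernel_\<nu>x[unfolded prob_kernel_def]]
    measurable_prob_algebraD[OF kernel_\<gamma>x[unfolded prob_kernel_def]]
  by (auto simp: space_prob_algebra)

lemma emeasure_space_\<nu>x [simp]: "emeasure (\<nu>x x) (space (\<nu>x x)) = 1"
  and emeasure_space_\<gamma>x [simp]: "emeasure (\<gamma>x x) (space (\<gamma>x x)) = 1"
  using prob_space.emeasure_space_1[OF prob_space_\<nu>x] prob_space.emeasure_space_1[OF prob_space_\<gamma>x] .

definition fibre :: "'x \<Rightarrow> ('x \<times> 'y \<times> 'z) measure" where
  "fibre x = return borel x \<Otimes>\<^sub>M (\<nu>x x \<Otimes>\<^sub>M \<gamma>x x)"

lemma sets_fibre: "sets (fibre x) = sets borel"
proof -
  have "sets (fibre x) = sets (borel \<Otimes>\<^sub>M (borel \<Otimes>\<^sub>M borel))"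
    unfolding fibre_def by (intro sets_pair_measure_cong sets_return sets_\<nu>x sets_\<gamma>x)
  then show ?thesis
    by (simp only: borel_prod)
qed

lemma measurable_fibre: "fibre \<in> borel \<rightarrow>\<^sub>M subprob_algebra borel"
  using measurable_pair_measure[OF return_measurable measurable_pair_measure[OF measurable_\<nu>x measurable_\<gamma>x]]
  by (simp add: fibre_def[abs_def] borel_prod)

lemma l_eq_bind: "l = \<mu> \<bind> fibre"
proof (rule borel_prod_measure_eqI)
  have "space \<mu> \<noteq> {}"
    using sets_\<mu> by (metis UNIV_not_empty sets_eq_imp_space_eq space_borel)
  then show "sets (\<mu> \<bind> fibre) = sets borel"
    using sets_fibre by (intro sets_bind) auto
  show "emeasure l UNIV \<noteq> \<infinity>"
    using prob_space.emeasure_space_1[OF prob_space_l] space_l by simp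
  fix A :: "'x set" and B :: "('y \<times> 'z) set" assume A: "A \<in> sets borel" and B: "B \<in> sets borel"
  have "emeasure l (A \<times> B) = (\<integral>\<^sup>+x. indicator A x * emeasure (\<nu>x x \<Otimes>\<^sub>M \<gamma>x x) B \<partial>\<mu>)"
    using compound A B unfolding is_compound_def by blast
  also have "\<dots> = (\<integral>\<^sup>+x. emeasure (fibre x) (A \<times> B) \<partial>\<mu>)"
  proof (rule nn_integral_cong)
    fix x
    interpret sigma_finite_measure "\<nu>x x \<Otimes>\<^sub>M \<gamma>x x"
      by (intro prob_space_imp_sigma_finite prob_space_pair prob_space_\<nu>x prob_space_\<gamma>x)
    show "indicator A x * emeasure (\<nu>x x \<Otimes>\<^sub>M \<gamma>x x) B = emeasure (fibre x) (A \<times> B)"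
      unfolding fibre_def using A B
      by (subst emeasure_pair_measure_Times) (auto simp: emeasure_return borel_prod[symmetric] sets_\<nu>x sets_\<gamma>x)
  qed
  also have "\<dots> = emeasure (\<mu> \<bind> fibre) (A \<times> B)"
    using A B \<open>space \<mu> \<noteq> {}\<close> measurable_fibre
    by (intro emeasure_bind[symmetric]) (auto simp: borel_prod[symmetric] measurable_cong_sets[OF sets_\<mu>])
  finally show "emeasure l (A \<times> B) = emeasure (\<mu> \<bind> fibre) (A \<times> B)" .
qed (rule sets_l)

lemma nn_integral_fibre:
  assumes "\<phi> \<in> borel_measurable borel"
  shows "(\<integral>\<^sup>+w. \<phi> w \<partial>fibre x) = (\<integral>\<^sup>+v. \<phi> (x, v) \<partial>(\<nu>x x \<Otimes>\<^sub>M \<gamma>x x))"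
proof -
  interpret N: sigma_finite_measure "\<nu>x x \<Otimes>\<^sub>M \<gamma>x x"
    by (intro prob_space_imp_sigma_finite prob_space_pair prob_space_\<nu>x prob_space_\<gamma>x)
  have "\<phi> \<in> borel_measurable (borel \<Otimes>\<^sub>M (\<nu>x x \<Otimes>\<^sub>M \<gamma>x x))"
    using assms
    by (simp add: borel_prod measurable_cong_sets[OF sets_pair_measure_cong[OF refl sets_pair_measure_cong[OF sets_\<nu>x sets_\<gamma>x]] refl])
  moreover have "\<phi> \<in> borel_measurable (fibre x)"
    using assms by (simp add: measurable_cong_sets[OF sets_fibre])
  ultimately show ?thesis
    unfolding fibre_def
    by (subst N.nn_integral_fst[symmetric]) (auto intro!: nn_integral_return N.borel_measurable_nn_integral_fst)
qed

lemma nn_integral_l: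
  assumes "\<phi> \<in> borel_measurable borel"
  shows "(\<integral>\<^sup>+w. \<phi> w \<partial>l) = (\<integral>\<^sup>+x. \<integral>\<^sup>+v. \<phi> (x, v) \<partial>(\<nu>x x \<Otimes>\<^sub>M \<gamma>x x) \<partial>\<mu>)"
  using measurable_fibre assms
  by (subst l_eq_bind) (simp add: nn_integral_bind measurable_cong_sets[OF sets_\<mu>] nn_integral_fibre)

lemma nn_integral_l_mult:
  assumes h1: "h1 \<in> borel_measurable borel" and h2: "h2 \<in> borel_measurable borel"
  shows "(\<integral>\<^sup>+w. h1 (pXY w) * h2 (pXZ w) \<partial>l)
       = (\<integral>\<^sup>+x. (\<integral>\<^sup>+y. h1 (x, y) \<partial>\<nu>x x) * (\<integral>\<^sup>+z. h2 (x, z) \<partial>\<gamma>x x) \<partial>\<mu>)"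
proof -
  have "(\<lambda>w. h1 (pXY w) * h2 (pXZ w)) \<in> borel_measurable borel"
    using h1 h2 by measurable
  then have "(\<integral>\<^sup>+w. h1 (pXY w) * h2 (pXZ w) \<partial>l)
      = (\<integral>\<^sup>+x. \<integral>\<^sup>+v. h1 (x, fst v) * h2 (x, snd v) \<partial>(\<nu>x x \<Otimes>\<^sub>M \<gamma>x x) \<partial>\<mu>)"
    by (simp add: nn_integral_l pXY_def pXZ_def)
  also have "\<dots> = (\<integral>\<^sup>+x. (\<integral>\<^sup>+y. h1 (x, y) \<partial>\<nu>x x) * (\<integral>\<^sup>+z. h2 (x, z) \<partial>\<gamma>x x) \<partial>\<mu>)"
    using h1 h2
    by (intro nn_integral_cong nn_integral_pair_measure_mult prob_space_imp_sigma_finite prob_space_\<gamma>x)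
       (simp_all add: measurable_cong_sets[OF sets_\<nu>x] measurable_cong_sets[OF sets_\<gamma>x])
  finally show ?thesis .
qed

lemma measurable_nn_integral_\<nu>x:
  "h \<in> borel_measurable borel \<Longrightarrow> (\<lambda>x. \<integral>\<^sup>+y. h (x, y) \<partial>\<nu>x x) \<in> borel_measurable borel"
  by (intro nn_integral_measurable_subprob_algebra2[OF _ measurable_\<nu>x]) (simp add: borel_prod)

lemma measurable_nn_integral_\<gamma>x:
  "h \<in> borel_measurable borel \<Longrightarrow> (\<lambda>x. \<integral>\<^sup>+z. h (x, z) \<partial>\<gamma>x x) \<in> borel_measurable borel"
  by (intro nn_integral_measurable_subprob_algebra2[OF _ measurable_\<gamma>x]) (simp add: borel_prod)

text \<open>Integrated form of \<open>\<integral> g(x,z) d\<gamma>\<^sup>x(z) = 1\<close> for \<open>\<mu>\<close>-almost every \<open>x\<close>.\<close>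

lemma nn_integral_density_margXZ_fst:
  assumes g: "g \<in> borel_measurable borel" and fst_marg: "distr (density (margXZ l) g) borel fst = \<mu>"
    and H: "H \<in> borel_measurable borel"
  shows "(\<integral>\<^sup>+x. H x * (\<integral>\<^sup>+z. g (x, z) \<partial>\<gamma>x x) \<partial>\<mu>) = (\<integral>\<^sup>+x. H x \<partial>\<mu>)"
proof -
  have "(\<integral>\<^sup>+x. H x \<partial>\<mu>) = (\<integral>\<^sup>+v. g v * H (fst v) \<partial>margXZ l)"
    using g H unfolding fst_marg[symmetric] by (simp add: nn_integral_distr nn_integral_density margXZ_def)
  also have "\<dots> = (\<integral>\<^sup>+w. H (fst (pXY w)) * g (pXZ w) \<partial>l)"
    using g H by (simp add: margXZ_def nn_integral_distr mult.commute pXY_def pXZ_def)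
  also have "\<dots> = (\<integral>\<^sup>+x. H x * (\<integral>\<^sup>+z. g (x, z) \<partial>\<gamma>x x) \<partial>\<mu>)"
    using nn_integral_l_mult[of "\<lambda>v. H (fst v)" g] g H by simp
  finally show ?thesis ..
qed

lemma nn_integral_density_margXY_fst:
  assumes g: "g \<in> borel_measurable borel" and fst_marg: "distr (density (margXY l) g) borel fst = \<mu>"
    and H: "H \<in> borel_measurable borel"
  shows "(\<integral>\<^sup>+x. (\<integral>\<^sup>+y. g (x, y) \<partial>\<nu>x x) * H x \<partial>\<mu>) = (\<integral>\<^sup>+x. H x \<partial>\<mu>)"
proof -
  have "(\<integral>\<^sup>+x. H x \<partial>\<mu>) = (\<integral>\<^sup>+v. g v * H (fst v) \<partial>margXY l)"
    using g H unfolding fst_marg[symmetric] by (simp add: nn_integral_distr nn_integral_density margXY_def)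
  also have "\<dots> = (\<integral>\<^sup>+w. g (pXY w) * H (fst (pXZ w)) \<partial>l)"
    using g H by (simp add: margXY_def nn_integral_distr pXY_def pXZ_def)
  also have "\<dots> = (\<integral>\<^sup>+x. (\<integral>\<^sup>+y. g (x, y) \<partial>\<nu>x x) * H x \<partial>\<mu>)"
    using nn_integral_l_mult[of g "\<lambda>v. H (fst v)"] g H by simp
  finally show ?thesis ..
qed

lemma margXY_density_pXZ:
  assumes g: "g \<in> borel_measurable borel" and fst_marg: "distr (density (margXZ l) g) borel fst = \<mu>"
  shows "margXY (density l (\<lambda>w. g (pXZ w))) = margXY l"
proof (rule measure_eqI)
  fix A assume "A \<in> sets (margXY (density l (\<lambda>w. g (pXZ w))))"
  then have A [measurable]: "A \<in> sets borel"
    by (simp add: margXY_def)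
  have "emeasure (margXY (density l (\<lambda>w. g (pXZ w)))) A = (\<integral>\<^sup>+w. indicator A (pXY w) * g (pXZ w) \<partial>l)"
    using g vimage_pXY_in_sets_l[OF A]
    by (simp add: margXY_def emeasure_distr emeasure_density mult.commute indicator_vimage[symmetric] space_l)
  also have "\<dots> = (\<integral>\<^sup>+x. (\<integral>\<^sup>+y. indicator A (x, y) \<partial>\<nu>x x) * (\<integral>\<^sup>+z. g (x, z) \<partial>\<gamma>x x) \<partial>\<mu>)"
    using g by (simp add: nn_integral_l_mult)
  also have "\<dots> = (\<integral>\<^sup>+x. (\<integral>\<^sup>+y. indicator A (x, y) \<partial>\<nu>x x) * (\<integral>\<^sup>+z. 1 \<partial>\<gamma>x x) \<partial>\<mu>)"
    using nn_integral_density_margXZ_fst[OF g fst_marg measurable_nn_integral_\<nu>x[of "indicator A"]]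
    by simp
  also have "\<dots> = emeasure (margXY l) A"
    using vimage_pXY_in_sets_l[OF A]
    by (subst nn_integral_l_mult[symmetric]) (simp_all add: margXY_def emeasure_distr indicator_vimage[symmetric] space_l)
  finally show "emeasure (margXY (density l (\<lambda>w. g (pXZ w)))) A = emeasure (margXY l) A" .
qed (simp add: margXY_def)

lemma margXZ_density_pXY:
  assumes g: "g \<in> borel_measurable borel" and fst_marg: "distr (density (margXY l) g) borel fst = \<mu>"
  shows "margXZ (density l (\<lambda>w. g (pXY w))) = margXZ l"
proof (rule measure_eqI)
  fix A assume "A \<in> sets (margXZ (density l (\<lambda>w. g (pXY w))))"
  then have A [measurable]: "A \<in> sets borel"
    by (simp add: margXZ_def)
  have "emeasure (margXZ (density l (\<lambda>w. g (pXY w)))) A = (\<integral>\<^sup>+w. g (pXY w) * indicator A (pXZ w) \<partial>l)"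
    using g vimage_pXZ_in_sets_l[OF A]
    by (simp add: margXZ_def emeasure_distr emeasure_density indicator_vimage[symmetric] space_l)
  also have "\<dots> = (\<integral>\<^sup>+x. (\<integral>\<^sup>+y. g (x, y) \<partial>\<nu>x x) * (\<integral>\<^sup>+z. indicator A (x, z) \<partial>\<gamma>x x) \<partial>\<mu>)"
    using g by (simp add: nn_integral_l_mult)
  also have "\<dots> = (\<integral>\<^sup>+x. (\<integral>\<^sup>+y. 1 \<partial>\<nu>x x) * (\<integral>\<^sup>+z. indicator A (x, z) \<partial>\<gamma>x x) \<partial>\<mu>)"
    using nn_integral_density_margXY_fst[OF g fst_marg measurable_nn_integral_\<gamma>x[of "indicator A"]]
    by simp
  also have "\<dots> = emeasure (margXZ l) A"
    using vimage_pXZ_in_sets_l[OF A]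
    by (subst nn_integral_l_mult[symmetric]) (simp_all add: margXZ_def emeasure_distr indicator_vimage[symmetric] space_l)
  finally show "emeasure (margXZ (density l (\<lambda>w. g (pXY w)))) A = emeasure (margXZ l) A" .
qed (simp add: margXZ_def)

lemma density_pXZ_in_Pi_XY:
  assumes l: "l \<in> Pi3 \<mu> \<nu> \<gamma>" and f: "f \<in> borel_measurable borel"
    and prob: "prob_space (density l (\<lambda>w. f (pXZ w)))"
    and XZ: "margXZ (density l (\<lambda>w. f (pXZ w))) \<in> Pi2 \<mu> \<gamma>"
  shows "density l (\<lambda>w. f (pXZ w)) \<in> Pi_XY \<mu> \<nu> \<gamma> l"
proof (rule Pi_XY_memI[OF l])
  have XZ_density: "margXZ (density l (\<lambda>w. f (pXZ w))) = density (margXZ l) f"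
    unfolding margXZ_def using f by (simp add: density_distr measurable_cong_sets[OF sets_l])
  show "borel_prob (density l (\<lambda>w. f (pXZ w)))"
    using prob by (simp add: borel_prob_def sets_l)
  show "margXY (density l (\<lambda>w. f (pXZ w))) = margXY l"
    using XZ f by (intro margXY_density_pXZ) (simp_all add: Pi2_def XZ_density)
  show "distr (density l (\<lambda>w. f (pXZ w))) borel pZ = \<gamma>"
    using XZ by (simp add: Pi2_def snd_margXZ sets_l)
qed

lemma density_pXY_in_Pi_XZ:
  assumes l: "l \<in> Pi3 \<mu> \<nu> \<gamma>" and f: "f \<in> borel_measurable borel"
    and prob: "prob_space (density l (\<lambda>w. f (pXY w)))"
    and XY: "margXY (density l (\<lambda>w. f (pXY w))) \<in> Pi2 \<mu> \<nu>"
  shows "density l (\<lambda>w. f (pXY w)) \<in> Pi_XZ \<mu> \<nu> \<gamma> l"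
proof (rule Pi_XZ_memI[OF l])
  have XY_density: "margXY (density l (\<lambda>w. f (pXY w))) = density (margXY l) f"
    unfolding margXY_def using f by (simp add: density_distr measurable_cong_sets[OF sets_l])
  show "borel_prob (density l (\<lambda>w. f (pXY w)))"
    using prob by (simp add: borel_prob_def sets_l)
  show "margXZ (density l (\<lambda>w. f (pXY w))) = margXZ l"
    using XY f by (intro margXZ_density_pXY) (simp_all add: Pi2_def XY_density)
  show "distr (density l (\<lambda>w. f (pXY w))) borel pY = \<nu>"
    using XY by (simp add: Pi2_def snd_margXY sets_l)
qed

lemma extreme_point_margXZ:
  assumes "l \<in> Pi3 \<mu> \<nu> \<gamma>" "extreme_point l (Pi_XY \<mu> \<nu> \<gamma> l)"
  shows "extreme_point (margXZ l) (Pi2 \<mu> \<gamma>)"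
  unfolding margXZ_def
  using margXZ_in_Pi2[OF assms(1)] density_pXZ_in_Pi_XY[OF assms(1)]
  by (intro extreme_point_distrI[OF assms(2) borel_prob_l]) (auto simp: Pi2_def margXZ_def)

lemma extreme_point_margXY:
  assumes "l \<in> Pi3 \<mu> \<nu> \<gamma>" "extreme_point l (Pi_XZ \<mu> \<nu> \<gamma> l)"
  shows "extreme_point (margXY l) (Pi2 \<mu> \<nu>)"
  unfolding margXY_def
  using margXY_in_Pi2[OF assms(1)] density_pXY_in_Pi_XZ[OF assms(1)]
  by (intro extreme_point_distrI[OF assms(2) borel_prob_l]) (auto simp: Pi2_def margXY_def)

end

theorem mainTheorem13:
  fixes \<mu> :: "'x::polish_space measure" and \<nu> :: "'y::polish_space measure"
    and \<gamma> :: "'z::polish_space measure" and l :: "('x \<times> 'y \<times> 'z) measure"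
  assumes "borel_prob \<mu>" and "borel_prob \<nu>" and "borel_prob \<gamma>"
    and "l \<in> Pi3 \<mu> \<nu> \<gamma>"
  shows "(extreme_point l (Pi3 \<mu> \<nu> \<gamma>) \<longrightarrow>
            extreme_point l (Pi_XY \<mu> \<nu> \<gamma> l) \<and> extreme_point l (Pi_YZ \<mu> \<nu> \<gamma> l)
            \<and> extreme_point l (Pi_XZ \<mu> \<nu> \<gamma> l))
       \<and> (extreme_point l (Pi_XY \<mu> \<nu> \<gamma> l) \<and> extreme_point (margXY l) (Pi2 \<mu> \<nu>) \<longrightarrow>
            extreme_point l (Pi3 \<mu> \<nu> \<gamma>))
       \<and> (\<forall>(\<nu>x :: 'x \<Rightarrow> 'y measure) (\<gamma>x :: 'x \<Rightarrow> 'z measure).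
            prob_kernel \<nu>x \<and> prob_kernel \<gamma>x
            \<and> is_compound l (\<lambda>x. \<nu>x x \<Otimes>\<^sub>M \<gamma>x x) \<mu>
            \<and> is_compound (margXY l) \<nu>x \<mu> \<and> is_compound (margXZ l) \<gamma>x \<mu> \<longrightarrow>
              (extreme_point l (Pi_XY \<mu> \<nu> \<gamma> l) \<longrightarrow> extreme_point (margXZ l) (Pi2 \<mu> \<gamma>))
            \<and> (extreme_point l (Pi_XY \<mu> \<nu> \<gamma> l) \<and> extreme_point l (Pi_XZ \<mu> \<nu> \<gamma> l) \<longrightarrow>
                 extreme_point l (Pi3 \<mu> \<nu> \<gamma>)))"
proof (intro conjI impI allI)
  assume "extreme_point l (Pi3 \<mu> \<nu> \<gamma>)"
  then show "extreme_point l (Pi_XY \<mu> \<nu> \<gamma> l)" "extreme_point l (Pi_YZ \<mu> \<nu> \<gamma> l)"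
    "extreme_point l (Pi_XZ \<mu> \<nu> \<gamma> l)"
    using assms(4) by (auto intro: extreme_point_subset simp: Pi_XY_def Pi_YZ_def Pi_XZ_def)
next
  assume "extreme_point l (Pi_XY \<mu> \<nu> \<gamma> l) \<and> extreme_point (margXY l) (Pi2 \<mu> \<nu>)"
  then show "extreme_point l (Pi3 \<mu> \<nu> \<gamma>)"
    using extreme_point_Pi3I[OF assms(4)] by blast
next
  fix \<nu>x :: "'x \<Rightarrow> 'y measure" and \<gamma>x :: "'x \<Rightarrow> 'z measure"
  assume "prob_kernel \<nu>x \<and> prob_kernel \<gamma>x \<and> is_compound l (\<lambda>x. \<nu>x x \<Otimes>\<^sub>M \<gamma>x x) \<mu>
    \<and> is_compound (margXY l) \<nu>x \<mu> \<and> is_compound (margXZ l) \<gamma>x \<mu>"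
  then interpret compound_product \<mu> \<nu>x \<gamma>x l
    using assms(1,4) by unfold_locales (auto simp: Pi3_def)
  show "extreme_point l (Pi_XY \<mu> \<nu> \<gamma> l) \<Longrightarrow> extreme_point (margXZ l) (Pi2 \<mu> \<gamma>)"
    by (rule extreme_point_margXZ[OF assms(4)])
  show "extreme_point l (Pi_XY \<mu> \<nu> \<gamma> l) \<and> extreme_point l (Pi_XZ \<mu> \<nu> \<gamma> l) \<Longrightarrow>
      extreme_point l (Pi3 \<mu> \<nu> \<gamma>)"
    using extreme_point_Pi3I[OF assms(4)] extreme_point_margXY[OF assms(4)] by blast
qed

end
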